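(* Let $p>3$ be prime. For $t\in\mathbb{Z}/p\mathbb{Z}$ put $a_t(p)=-\sum_{x\bmod p}\left(\frac{x^3+t^2}{p}\right)$ and $A_2(p)=\sum_{t\bmod p}a_t(p)^2$. Then $A_2(p)=2p^2-2p$ if $p\equiv 1\pmod 3$, and $A_2(p)=0$ if $p\equiv 2 \pmod 3$.
   Context: $\left(\frac{\cdot}{p}\right)$ denotes the Legendre symbol (equal to $0$ at multiples of $p$). *)

theory Defs
  imports "HOL-Number_Theory.Number_Theory"
begin

definition a_coef :: "int \<Rightarrow> int \<Rightarrow> int" where
  "a_coef p t = - (\<Sum>x\<in>{0..p-1}. Legendre (x^3 + t^2) p)"

definition A2 :: "int \<Rightarrow> int" where
  "A2 p = (\<Sum>t\<in>{0..p-1}. (a_coef p t)^2)"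

end

theory Submission
  imports Defs
begin

text \<open>
  Let b(s) = cubic_char_sum s be the sum of ((x^3 + s)/p) over x mod p, so that a_t(p) = -b(t^2).
  As t runs mod p, t^2 hits s exactly 1 + (s/p) times, hence A_2(p) is the sum of
  (1 + (s/p)) b(s)^2. The twisted part vanishes: substituting g^3 s for s, with g a non-residue,
  multiplies both (s/p) and b(s) by -1. Expanding b(s)^2 and using that the sum over s of
  ((s + u)/p)((s + v)/p) is p - 1 if u = v and -1 otherwise, the sum of b(s)^2 becomes
  p N - p^2, where N counts the pairs (x, y) with x^3 = y^3. In the cyclic group of units every
  cube has gcd(3, p - 1) cube roots, so N = 1 + (p - 1) gcd(3, p - 1) and
  A_2(p) = p (p - 1) (gcd(3, p - 1) - 1).
\<close>

lemma Legendre_cong: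
  assumes "[a = b] (mod p)"
  shows "Legendre a p = Legendre b p"
proof -
  have "[a = 0] (mod p) \<longleftrightarrow> [b = 0] (mod p)" "QuadRes p a \<longleftrightarrow> QuadRes p b"
    using assms unfolding QuadRes_def by (meson cong_sym cong_trans)+
  then show ?thesis by (simp add: Legendre_def)
qed

lemma Legendre_mod [simp]: "Legendre (a mod p) p = Legendre a p"
  by (rule Legendre_cong) (simp add: cong_def)

lemma Legendre_mod_add [simp]: "Legendre (a mod p + b) p = Legendre (a + b) p"
  by (metis Legendre_mod mod_add_left_eq)

lemma Legendre_eq_0_iff: "Legendre a p = 0 \<longleftrightarrow> p dvd a"
  by (simp add: Legendre_def cong_0_iff)

lemma Legendre_cases: "Legendre a p = 0 \<or> Legendre a p = 1 \<or> Legendre a p = -1"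
  by (simp add: Legendre_def)

lemma Legendre_mult_self: "Legendre a p * Legendre a p = (if p dvd a then 0 else 1)"
  using Legendre_cases[of a p] Legendre_eq_0_iff[of a p] by auto

lemma Legendre_1 [simp]: "1 < p \<Longrightarrow> Legendre 1 p = 1"
  by (auto simp: Legendre_def QuadRes_def cong_def intro: exI[of _ 1])

lemma Legendre_mult:
  assumes "prime p" "2 < p"
  shows "Legendre (a * b) p = Legendre a p * Legendre b p"
proof -
  let ?n = "nat ((p - 1) div 2)"
  have euler: "[Legendre x p = x ^ ?n] (mod p)" for x
    using euler_criterion[of "nat p" x] assms by (simp add: nat_diff_distrib nat_div_distrib)
  have "[Legendre (a * b) p = a ^ ?n * b ^ ?n] (mod p)"
    using euler[of "a * b"] by (simp add: power_mult_distrib)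
  also have "[a ^ ?n * b ^ ?n = Legendre a p * Legendre b p] (mod p)"
    using euler[of a] euler[of b] by (intro cong_mult) (auto simp: cong_sym)
  finally have "p dvd Legendre (a * b) p - Legendre a p * Legendre b p"
    by (simp add: cong_iff_dvd_diff)
  moreover have "\<bar>Legendre (a * b) p - Legendre a p * Legendre b p\<bar> < p"
    using assms(2) Legendre_cases[of "a * b" p] Legendre_cases[of a p] Legendre_cases[of b p] by auto
  ultimately show ?thesis
    using dvd_imp_le_int[of "Legendre (a * b) p - Legendre a p * Legendre b p" p] assms(2)
    by linarith
qed

lemma sum_mod_affine_reindex:
  fixes m a b :: int
  assumes "0 < m" "coprime a m" "\<And>x. f (x mod m) = f x"
  shows "(\<Sum>x\<in>{0..m-1}. f (a * x + b)) = (\<Sum>x\<in>{0..m-1}. f x)"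
proof -
  let ?h = "\<lambda>x. (a * x + b) mod m"
  have "inj_on ?h {0..m-1}"
  proof
    fix x y assume "x \<in> {0..m-1}" "y \<in> {0..m-1}" "?h x = ?h y"
    then have "[a * x = a * y] (mod m)" "x mod m = x" "y mod m = y"
      by (auto simp: cong_def[symmetric] cong_add_rcancel)
    then show "x = y"
      using assms(2) by (metis cong_def cong_mult_lcancel)
  qed
  moreover have "?h ` {0..m-1} \<subseteq> {0..m-1}"
    using assms(1) by auto
  ultimately have "?h ` {0..m-1} = {0..m-1}"
    by (intro endo_inj_surj) auto
  then have "(\<Sum>x\<in>{0..m-1}. f x) = (\<Sum>x\<in>{0..m-1}. f (?h x))"
    using sum.reindex[OF \<open>inj_on ?h _\<close>, of f] by simp
  then show ?thesis
    using assms(3) by simp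
qed

lemma sum_mod_mult_reindex:
  fixes m a :: int
  assumes "0 < m" "coprime a m" "\<And>x. f (x mod m) = f x"
  shows "(\<Sum>x\<in>{0..m-1}. f (a * x)) = (\<Sum>x\<in>{0..m-1}. f x)"
  using sum_mod_affine_reindex[of m a f 0] assms by simp

lemma card_roots_of_unity_mod_prime:
  fixes p k :: nat
  assumes "prime p"
  shows "card {x \<in> totatives p. [x ^ k = 1] (mod p)} = gcd k (p - 1)"
proof -
  have p1: "1 < p"
    using assms prime_gt_1_nat by blast
  have "[x ^ k = 1] (mod p) \<longleftrightarrow> ord p x dvd gcd k (p - 1)" if "x \<in> totatives p" for x
  proof -
    have "ord p x dvd p - 1"
      using that order_divides_totient[of p x] assms by (simp add: totatives_def coprime_commute totient_prime)
    then show ?thesis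
      by (simp add: ord_divides')
  qed
  then have "card {x \<in> totatives p. [x ^ k = 1] (mod p)} =
             card (\<Union>d\<in>{d. d dvd gcd k (p - 1)}. {x \<in> totatives p. ord p x = d})"
    by (intro arg_cong[where f = card]) blast
  also have "\<dots> = (\<Sum>d | d dvd gcd k (p - 1). card {x \<in> totatives p. ord p x = d})"
    using p1 by (intro card_UN_disjoint finite_divisors_nat) auto
  also have "\<dots> = (\<Sum>d | d dvd gcd k (p - 1). totient d)"
  proof (intro sum.cong refl)
    fix d assume "d \<in> {d. d dvd gcd k (p - 1)}"
    then have "d dvd p - 1"
      using dvd_trans gcd_dvd2 by blast
    then show "card {x \<in> totatives p. ord p x = d} = totient d"
      using prime_card_elements_with_ord_eq_totient[OF p1 assms, of d] by simp
  qed
  also have "\<dots> = gcd k (p - 1)"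
    by (rule totient_divisor_sum)
  finally show ?thesis .
qed

lemma card_roots_of_unity_mod_prime_int:
  fixes p :: int
  assumes "prime p" "0 < k"
  shows "int (card {y \<in> {0..p-1}. [y ^ k = 1] (mod p)}) = gcd (int k) (p - 1)"
proof -
  define n where "n = nat p"
  have n: "p = int n" "prime n"
    using assms(1) prime_ge_0_int[of p] by (auto simp: n_def)
  have n1: "1 < n" using n(2) prime_gt_1_nat by blast
  have cong_nat: "[int x ^ k = 1] (mod int n) \<longleftrightarrow> [x ^ k = 1] (mod n)" for x
    using cong_int_iff[of "x ^ k" 1 n] by simp
  have "{y \<in> {0..p-1}. [y ^ k = 1] (mod p)} = int ` {x \<in> {0<..<n}. [x ^ k = 1] (mod n)}"
  proof (intro equalityI subsetI)
    fix y assume y: "y \<in> {y \<in> {0..p-1}. [y ^ k = 1] (mod p)}"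
    then have "y \<noteq> 0"
      using assms(2) n n1 by (auto simp: cong_def zero_power)
    then show "y \<in> int ` {x \<in> {0<..<n}. [x ^ k = 1] (mod n)}"
      using y n cong_nat[of "nat y"] by (auto intro!: image_eqI[of _ _ "nat y"])
  next
    fix y assume "y \<in> int ` {x \<in> {0<..<n}. [x ^ k = 1] (mod n)}"
    then show "y \<in> {y \<in> {0..p-1}. [y ^ k = 1] (mod p)}"
      using n cong_nat by auto
  qed
  then have "card {y \<in> {0..p-1}. [y ^ k = 1] (mod p)} = gcd k (n - 1)"
    using card_roots_of_unity_mod_prime[of n k] n by (simp add: totatives_prime card_image)
  moreover have "p - 1 = int (n - 1)"
    using n n1 by simp
  ultimately show ?thesis
    by simp
qed

lemma dvd_iff_eq_0_residue:
  fixes p x :: int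
  shows "x \<in> {0..p-1} \<Longrightarrow> p dvd x \<longleftrightarrow> x = 0"
  by (cases "0 < x") (auto simp: zdvd_not_zless)

lemma sum_indicator_eq_card:
  "finite A \<Longrightarrow> (\<Sum>x\<in>A. if P x then 1 else 0) = of_nat (card {x \<in> A. P x})"
  by (simp add: sum.inter_filter[symmetric])

lemma card_power_cong_mod_prime:
  fixes p x :: int
  assumes "prime p" "0 < k"
  shows "int (card {y \<in> {0..p-1}. [y ^ k = x ^ k] (mod p)}) =
           (if p dvd x then 1 else gcd (int k) (p - 1))"
proof (cases "p dvd x")
  case True
  have "[x ^ k = 0] (mod p)"
    using True assms(2) dvd_trans[OF True dvd_power] by (simp add: cong_0_iff)
  then have "[y ^ k = x ^ k] (mod p) \<longleftrightarrow> p dvd y" for y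
    using assms by (metis cong_0_iff cong_sym cong_trans prime_dvd_power_iff)
  then have "{y \<in> {0..p-1}. [y ^ k = x ^ k] (mod p)} = {0}"
    using prime_gt_1_int[OF assms(1)] dvd_iff_eq_0_residue by auto
  then show ?thesis
    using True by simp
next
  case False
  then have "coprime (x ^ k) p"
    using assms(1) by (simp add: prime_imp_coprime coprime_commute)
  have p0: "0 < p" using assms(1) prime_gt_0_int by blast
  have periodic: "[(y mod p) ^ k = c] (mod p) \<longleftrightarrow> [y ^ k = c] (mod p)" for y c
    by (simp add: cong_def power_mod)
  have "card {y \<in> {0..p-1}. [y ^ k = x ^ k] (mod p)} =
        (\<Sum>y\<in>{0..p-1}. if [y ^ k = x ^ k] (mod p) then 1 else 0)"
    by (simp add: sum_indicator_eq_card)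
  also have "\<dots> = (\<Sum>y\<in>{0..p-1}. if [(x * y) ^ k = x ^ k] (mod p) then 1 else 0)"
    using False assms(1) p0 periodic
    by (intro sum_mod_mult_reindex[symmetric]) (auto simp: prime_imp_coprime coprime_commute)
  also have "\<dots> = (\<Sum>y\<in>{0..p-1}. if [y ^ k = 1] (mod p) then 1 else 0)"
    using cong_mult_lcancel[OF \<open>coprime (x ^ k) p\<close>, of "_ ^ k" 1]
    by (simp add: power_mult_distrib)
  also have "\<dots> = card {y \<in> {0..p-1}. [y ^ k = 1] (mod p)}"
    by (simp add: sum_indicator_eq_card)
  finally show ?thesis
    using False card_roots_of_unity_mod_prime_int[OF assms] by simp
qed

lemma sum_card_power_cong_mod_prime:
  fixes p :: int
  assumes "prime p" "0 < k"
  shows "(\<Sum>x\<in>{0..p-1}. int (card {y \<in> {0..p-1}. [y ^ k = x ^ k] (mod p)})) =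
           1 + (p - 1) * gcd (int k) (p - 1)"
proof -
  have p1: "1 < p" using assms(1) prime_gt_1_int by blast
  have "(\<Sum>x\<in>{0..p-1}. int (card {y \<in> {0..p-1}. [y ^ k = x ^ k] (mod p)})) =
        (\<Sum>x\<in>{0..p-1}. if x = 0 then 1 else gcd (int k) (p - 1))"
    by (intro sum.cong refl) (simp only: card_power_cong_mod_prime[OF assms] dvd_iff_eq_0_residue)
  also have "\<dots> = 1 + (p - 1) * gcd (int k) (p - 1)"
    using p1 by (simp add: sum.remove[of _ 0] card_Diff_singleton)
  finally show ?thesis .
qed

locale odd_prime =
  fixes p :: int
  assumes prime: "prime p" and gt_2: "2 < p"
begin

lemma coprime_if_not_dvd: "\<not> p dvd a \<Longrightarrow> coprime a p"
  using prime_imp_coprime[OF prime] by (simp add: coprime_commute)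

lemma Legendre_cube: "Legendre (a ^ 3) p = Legendre a p"
  using Legendre_cases[of a p]
  by (auto simp: power3_eq_cube Legendre_mult[OF prime gt_2])

lemma card_square_roots:
  "int (card {t \<in> {0..p-1}. [t ^ 2 = s] (mod p)}) = 1 + Legendre s p"
proof -
  consider "p dvd s" | x where "\<not> p dvd s" "\<not> p dvd x" "[x ^ 2 = s] (mod p)" | "\<not> p dvd s" "\<not> QuadRes p s"
    using prime by (metis QuadRes_def cong_dvd_iff prime_dvd_power_iff zero_less_numeral)
  then show ?thesis
  proof cases
    case 1
    then have "[t ^ 2 = s] (mod p) \<longleftrightarrow> [t ^ 2 = 0 ^ 2] (mod p)" for t
      by (metis cong_0_iff cong_sym cong_trans power_zero_numeral)
    then show ?thesis
      using 1 card_power_cong_mod_prime[OF prime, of 2 0] by (simp add: Legendre_eq_0_iff)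
  next
    case 2
    then have "[t ^ 2 = s] (mod p) \<longleftrightarrow> [t ^ 2 = x ^ 2] (mod p)" for t
      by (meson cong_sym cong_trans)
    moreover have "gcd 2 (p - 1) = 2"
      using prime gt_2 prime_odd_int[of p] by (simp add: gcd_unique_int)
    moreover have "Legendre s p = 1"
      using 2 by (auto simp: Legendre_def QuadRes_def cong_0_iff)
    ultimately show ?thesis
      using 2 card_power_cong_mod_prime[OF prime, of 2 x] by simp
  next
    case 3
    then have "{t \<in> {0..p-1}. [t ^ 2 = s] (mod p)} = {}"
      by (auto simp: QuadRes_def)
    moreover have "Legendre s p = -1"
      using 3 by (auto simp: Legendre_def cong_0_iff)
    ultimately show ?thesis
      by (simp only: card.empty)
  qed
qed

lemma sum_over_squares:
  assumes "\<And>x. F (x mod p) = F x"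
  shows "(\<Sum>t\<in>{0..p-1}. F (t ^ 2)) = (\<Sum>s\<in>{0..p-1}. (1 + Legendre s p) * F s)"
proof -
  have "(\<Sum>t\<in>{0..p-1}. F (t ^ 2)) = (\<Sum>t\<in>{0..p-1}. F (t ^ 2 mod p))"
    by (simp add: assms)
  also have "\<dots> = (\<Sum>s\<in>{0..p-1}. \<Sum>t\<in>{t \<in> {0..p-1}. t ^ 2 mod p = s}. F (t ^ 2 mod p))"
    using gt_2 by (intro sum.group[symmetric]) auto
  also have "\<dots> = (\<Sum>s\<in>{0..p-1}. int (card {t \<in> {0..p-1}. [t ^ 2 = s] (mod p)}) * F s)"
    by (intro sum.cong refl) (auto simp: cong_def)
  also have "\<dots> = (\<Sum>s\<in>{0..p-1}. (1 + Legendre s p) * F s)"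
    by (simp only: card_square_roots)
  finally show ?thesis .
qed

lemma sum_Legendre_eq_0: "(\<Sum>x\<in>{0..p-1}. Legendre (x + b) p) = 0"
proof -
  have "(\<Sum>x\<in>{0..p-1}. Legendre (1 * x + b) p) = (\<Sum>x\<in>{0..p-1}. Legendre x p)"
    using gt_2 by (intro sum_mod_affine_reindex) auto
  also have "\<dots> = 0"
    \<comment> \<open>counting the t mod p according to t^2 gives p = sum of (1 + (s/p))\<close>
    using sum_over_squares[of "\<lambda>_. 1"] by (simp add: sum.distrib)
  finally show ?thesis
    by simp
qed

lemma nonresidue_exists: "\<exists>g. Legendre g p = -1"
proof (rule ccontr)
  assume "\<nexists>g. Legendre g p = -1"
  then have "0 \<le> Legendre x p" for x
    using Legendre_cases[of x p] by auto
  then have "Legendre 1 p \<le> (\<Sum>x\<in>{0..p-1}. Legendre x p)"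
    using gt_2 by (intro member_le_sum) auto
  then show False
    using gt_2 sum_Legendre_eq_0[of 0] by simp
qed

lemma sum_Legendre_mult_shift:
  "(\<Sum>s\<in>{0..p-1}. Legendre s p * Legendre (s + d) p) = (if p dvd d then p - 1 else -1)"
proof -
  define C where "C d = (\<Sum>s\<in>{0..p-1}. Legendre s p * Legendre (s + d) p)" for d
  have C_dvd: "C d = p - 1" if "p dvd d" for d
  proof -
    have "C d = (\<Sum>s\<in>{0..p-1}. Legendre s p * Legendre s p)"
      unfolding C_def using that
      by (intro sum.cong refl arg_cong2[where f = "(*)"] Legendre_cong) (simp add: cong_iff_dvd_diff)
    also have "\<dots> = (\<Sum>s\<in>{0..p-1}. if s = 0 then 0 else 1)"
      by (intro sum.cong refl) (simp add: Legendre_mult_self dvd_iff_eq_0_residue)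
    also have "\<dots> = p - 1"
      using gt_2 by (simp add: sum.remove[of _ 0] card_Diff_singleton)
    finally show ?thesis .
  qed
  have C_unit: "C d = C 1" if "\<not> p dvd d" for d
  proof -
    have "C d = (\<Sum>s\<in>{0..p-1}. Legendre (d * s) p * Legendre (d * s + d) p)"
      unfolding C_def using that gt_2
      by (intro sum_mod_mult_reindex[symmetric]) (auto simp: coprime_if_not_dvd)
    also have "\<dots> = C 1"
      unfolding C_def
    proof (intro sum.cong refl)
      fix s
      have "Legendre (d * s) p * Legendre (d * s + d) p =
            (Legendre d p * Legendre d p) * (Legendre s p * Legendre (s + 1) p)"
        by (simp add: Legendre_mult[OF prime gt_2, symmetric] algebra_simps)
      then show "Legendre (d * s) p * Legendre (d * s + d) p =
                 Legendre s p * Legendre (s + 1) p"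
        using that by (simp add: Legendre_mult_self)
    qed
    finally show ?thesis .
  qed
  have "(\<Sum>d\<in>{0..p-1} - {0}. C d) = (\<Sum>d\<in>{0..p-1} - {0}. C 1)"
    by (intro sum.cong refl C_unit) (simp add: dvd_iff_eq_0_residue)
  then have "(\<Sum>d\<in>{0..p-1}. C d) = (p - 1) + (p - 1) * C 1"
    using gt_2 C_dvd[of 0] by (simp add: sum.remove[of _ 0] card_Diff_singleton)
  moreover have "(\<Sum>d\<in>{0..p-1}. C d) = (\<Sum>s\<in>{0..p-1}. Legendre s p * (\<Sum>d\<in>{0..p-1}. Legendre (d + s) p))"
    unfolding C_def by (subst sum.swap) (simp add: sum_distrib_left add.commute)
  ultimately have "(p - 1) + (p - 1) * C 1 = 0"
    unfolding sum_Legendre_eq_0 by simp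
  then have "(p - 1) * (C 1 + 1) = 0"
    by (simp add: algebra_simps)
  then have "C 1 = -1"
    using gt_2 by simp
  then show ?thesis
    using C_dvd[of d] C_unit[of d] unfolding C_def by (cases "p dvd d") simp_all
qed

lemma sum_Legendre_mult_shift_cong:
  "(\<Sum>s\<in>{0..p-1}. Legendre (s + a) p * Legendre (s + b) p) =
     (if [a = b] (mod p) then p - 1 else -1)"
proof -
  have "(\<Sum>s\<in>{0..p-1}. Legendre (1 * s + a) p * Legendre ((1 * s + a) + (b - a)) p) =
        (\<Sum>s\<in>{0..p-1}. Legendre s p * Legendre (s + (b - a)) p)"
    using gt_2 by (intro sum_mod_affine_reindex) auto
  then show ?thesis
    by (simp add: sum_Legendre_mult_shift cong_iff_dvd_diff dvd_diff_commute)
qed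

definition cubic_char_sum :: "int \<Rightarrow> int" where
  "cubic_char_sum s = (\<Sum>x\<in>{0..p-1}. Legendre (x ^ 3 + s) p)"

lemma A2_eq_sum_cubic_char_sum: "A2 p = (\<Sum>t\<in>{0..p-1}. cubic_char_sum (t ^ 2) ^ 2)"
  by (simp add: A2_def a_coef_def cubic_char_sum_def)

lemma cubic_char_sum_mod: "cubic_char_sum (s mod p) = cubic_char_sum s"
  unfolding cubic_char_sum_def by (simp add: add.commute[of "_ ^ 3"])

lemma cubic_char_sum_scale:
  assumes "\<not> p dvd g"
  shows "cubic_char_sum (g ^ 3 * s) = Legendre g p * cubic_char_sum s"
proof -
  have periodic: "Legendre ((x mod p) ^ 3 + c) p = Legendre (x ^ 3 + c) p" for x c
    by (intro Legendre_cong cong_add cong_pow cong_refl) (simp add: cong_def)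
  have "cubic_char_sum (g ^ 3 * s) = (\<Sum>x\<in>{0..p-1}. Legendre ((g * x) ^ 3 + g ^ 3 * s) p)"
    unfolding cubic_char_sum_def using assms gt_2 periodic
    by (intro sum_mod_mult_reindex[symmetric]) (auto simp: coprime_if_not_dvd)
  also have "\<dots> = (\<Sum>x\<in>{0..p-1}. Legendre g p * Legendre (x ^ 3 + s) p)"
  proof (intro sum.cong refl)
    fix x
    have "(g * x) ^ 3 + g ^ 3 * s = g ^ 3 * (x ^ 3 + s)"
      by (simp add: algebra_simps)
    then show "Legendre ((g * x) ^ 3 + g ^ 3 * s) p = Legendre g p * Legendre (x ^ 3 + s) p"
      by (simp add: Legendre_mult[OF prime gt_2] Legendre_cube)
  qed
  finally show ?thesis
    by (simp add: cubic_char_sum_def sum_distrib_left)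
qed

lemma sum_Legendre_mult_cubic_char_sum_sq:
  "(\<Sum>s\<in>{0..p-1}. Legendre s p * cubic_char_sum s ^ 2) = 0"
proof -
  obtain g where g: "Legendre g p = -1"
    using nonresidue_exists by blast
  then have "\<not> p dvd g"
    using Legendre_eq_0_iff[of g p] by auto
  then have "(\<Sum>s\<in>{0..p-1}. Legendre s p * cubic_char_sum s ^ 2) =
             (\<Sum>s\<in>{0..p-1}. Legendre (g ^ 3 * s) p * cubic_char_sum (g ^ 3 * s) ^ 2)"
    using gt_2 by (intro sum_mod_mult_reindex[symmetric]) (auto simp: coprime_if_not_dvd cubic_char_sum_mod)
  also have "\<dots> = - (\<Sum>s\<in>{0..p-1}. Legendre s p * cubic_char_sum s ^ 2)"
    using g \<open>\<not> p dvd g\<close>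
    by (simp add: sum_negf Legendre_mult[OF prime gt_2] Legendre_cube cubic_char_sum_scale power_mult_distrib)
  finally show ?thesis
    by simp
qed

lemma sum_cubic_char_sum_sq:
  "(\<Sum>s\<in>{0..p-1}. cubic_char_sum s ^ 2) =
     p * (\<Sum>x\<in>{0..p-1}. int (card {y \<in> {0..p-1}. [y ^ 3 = x ^ 3] (mod p)})) - p ^ 2"
proof -
  have "(\<Sum>s\<in>{0..p-1}. cubic_char_sum s ^ 2) =
        (\<Sum>x\<in>{0..p-1}. \<Sum>y\<in>{0..p-1}. \<Sum>s\<in>{0..p-1}. Legendre (s + x ^ 3) p * Legendre (s + y ^ 3) p)"
    unfolding cubic_char_sum_def power2_eq_square sum_product
    by (subst sum.swap, subst (2) sum.swap) (simp add: add.commute)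
  also have "\<dots> = (\<Sum>x\<in>{0..p-1}. \<Sum>y\<in>{0..p-1}. p * (if [y ^ 3 = x ^ 3] (mod p) then 1 else 0) - 1)"
    by (intro sum.cong refl) (simp add: sum_Legendre_mult_shift_cong cong_sym_eq)
  also have "\<dots> = (\<Sum>x\<in>{0..p-1}. p * int (card {y \<in> {0..p-1}. [y ^ 3 = x ^ 3] (mod p)}) - p)"
    using gt_2 by (simp add: sum_subtractf sum_distrib_left[symmetric] sum_indicator_eq_card)
  also have "\<dots> = p * (\<Sum>x\<in>{0..p-1}. int (card {y \<in> {0..p-1}. [y ^ 3 = x ^ 3] (mod p)})) - p ^ 2"
    using gt_2 by (simp add: sum_subtractf sum_distrib_left power2_eq_square)
  finally show ?thesis .
qed

lemma A2_eq_gcd: "A2 p = p * (p - 1) * (gcd 3 (p - 1) - 1)"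
proof -
  have "A2 p = (\<Sum>s\<in>{0..p-1}. (1 + Legendre s p) * cubic_char_sum s ^ 2)"
    unfolding A2_eq_sum_cubic_char_sum by (rule sum_over_squares) (simp add: cubic_char_sum_mod)
  also have "\<dots> = (\<Sum>s\<in>{0..p-1}. cubic_char_sum s ^ 2)"
    by (simp add: distrib_right sum.distrib sum_Legendre_mult_cubic_char_sum_sq)
  also have "\<dots> = p * (1 + (p - 1) * gcd 3 (p - 1)) - p ^ 2"
    using sum_card_power_cong_mod_prime[OF prime, of 3] by (simp add: sum_cubic_char_sum_sq)
  finally show ?thesis
    by (simp add: algebra_simps power2_eq_square)
qed

end

theorem mainTheorem4:
  fixes p :: int
  assumes "prime p" and "p > 3"
  shows "([p = 1] (mod 3) \<longrightarrow> A2 p = 2 * p^2 - 2 * p) \<and>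
         ([p = 2] (mod 3) \<longrightarrow> A2 p = 0)"
proof -
  interpret odd_prime p
    using assms by unfold_locales auto
  have gcd_3: "gcd 3 (p - 1) = gcd 3 ((p - 1) mod 3)"
    by (metis gcd.commute gcd_red_int)
  show ?thesis
  proof (intro conjI impI)
    assume "[p = 1] (mod 3)"
    then have "(p - 1) mod 3 = 0"
      unfolding cong_def by presburger
    then show "A2 p = 2 * p^2 - 2 * p"
      using gcd_3 by (simp add: A2_eq_gcd algebra_simps power2_eq_square)
  next
    assume "[p = 2] (mod 3)"
    then have "(p - 1) mod 3 = 1"
      unfolding cong_def by presburger
    then show "A2 p = 0"
      using gcd_3 by (simp add: A2_eq_gcd)
  qed
qed

end
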